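(* Let $(T,D)$ be a predominated tree. Staller wins the MBD game on $(T,D)$ if and only if $T$ contains a substructure $F\in\mathcal S$ such that $X(F)\cap D=\emptyset$.
   Context: A predominated graph is a pair $(G,D)$ with $G$ a finite simple graph and $D\subseteq V(G)$. In the MBD game on $(G,D)$, Staller and Dominator alternately claim unclaimed vertices of $V(G)$ (including vertices of $D$), Staller first, until all vertices are claimed; Staller wins if she claims all of $N_G[v]$ for some $v\in V(G)\setminus D$, and Dominator wins otherwise. For a tree $T$, $S(T)$ is obtained by subdividing each edge of $T$ exactly once; $\mathcal S=\{S(T):T\text{ a tree}\}$ and $X(S(T))=V(T)$ (with $S(P_1)=P_1$, $X(P_1)=V(P_1)$). $F\in\mathcal S$ is a substructure in $G$ if $F$ is a subgraph of $G$ and $\deg_G(v)=\deg_F(v)$ for every $v\in X(F)$. *)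

theory Defs
  imports Main
begin

definition graph :: "'a set \<Rightarrow> ('a \<Rightarrow> 'a \<Rightarrow> bool) \<Rightarrow> bool" where
  "graph V E \<longleftrightarrow> finite V \<and> (\<forall>u v. E u v \<longrightarrow> u \<in> V \<and> v \<in> V)
     \<and> (\<forall>u v. E u v \<longrightarrow> E v u) \<and> (\<forall>u. \<not> E u u)"

definition connected :: "'a set \<Rightarrow> ('a \<Rightarrow> 'a \<Rightarrow> bool) \<Rightarrow> bool" where
  "connected V E \<longleftrightarrow> (\<forall>u\<in>V. \<forall>v\<in>V. E\<^sup>*\<^sup>* u v)"

definition is_cycle :: "('a \<Rightarrow> 'a \<Rightarrow> bool) \<Rightarrow> 'a list \<Rightarrow> bool" where
  "is_cycle E cs \<longleftrightarrow> length cs \<ge> 3 \<and> distinct cs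
     \<and> (\<forall>i. Suc i < length cs \<longrightarrow> E (cs ! i) (cs ! Suc i)) \<and> E (last cs) (hd cs)"

definition tree :: "'a set \<Rightarrow> ('a \<Rightarrow> 'a \<Rightarrow> bool) \<Rightarrow> bool" where
  "tree V E \<longleftrightarrow> graph V E \<and> V \<noteq> {} \<and> connected V E \<and> (\<nexists>cs. is_cycle E cs)"

definition nbhd :: "'a set \<Rightarrow> ('a \<Rightarrow> 'a \<Rightarrow> bool) \<Rightarrow> 'a \<Rightarrow> 'a set" where
  "nbhd V E v = {u \<in> V. E v u}"

definition closed_nbhd :: "'a set \<Rightarrow> ('a \<Rightarrow> 'a \<Rightarrow> bool) \<Rightarrow> 'a \<Rightarrow> 'a set" where
  "closed_nbhd V E v = insert v (nbhd V E v)"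

definition degree :: "'a set \<Rightarrow> ('a \<Rightarrow> 'a \<Rightarrow> bool) \<Rightarrow> 'a \<Rightarrow> nat" where
  "degree V E v = card (nbhd V E v)"

definition staller_final :: "'a set \<Rightarrow> ('a \<Rightarrow> 'a \<Rightarrow> bool) \<Rightarrow> 'a set \<Rightarrow> 'a set \<Rightarrow> bool" where
  "staller_final V E D S \<longleftrightarrow> (\<exists>v \<in> V - D. closed_nbhd V E v \<subseteq> S)"

text \<open>mbd_win V E D n S U t: with n moves remaining, Staller owning S,
unclaimed vertices U, and t = True iff Staller is to move, Staller can force
a win (perfect-information finite game, backward induction).\<close>
primrec mbd_win :: "'a set \<Rightarrow> ('a \<Rightarrow> 'a \<Rightarrow> bool) \<Rightarrow> 'a set \<Rightarrow> nat \<Rightarrow> 'a set \<Rightarrow> 'a set \<Rightarrow> bool \<Rightarrow> bool" where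
  "mbd_win V E D 0 S U t = staller_final V E D S"
| "mbd_win V E D (Suc n) S U t =
     (if t then (\<exists>u\<in>U. mbd_win V E D n (insert u S) (U - {u}) False)
      else (\<forall>u\<in>U. mbd_win V E D n S (U - {u}) True))"

definition staller_wins_MBD :: "'a set \<Rightarrow> ('a \<Rightarrow> 'a \<Rightarrow> bool) \<Rightarrow> 'a set \<Rightarrow> bool" where
  "staller_wins_MBD V E D \<longleftrightarrow> mbd_win V E D (card V) {} V True"

text \<open>(VF, EF) is (isomorphic to) S(T) for a tree T with vertex set X = X(F):
the vertices outside X are in bijection m with the edges of T, and the edges
of F are exactly x -- m{x,y} for tree edges xy.\<close>
definition is_S_graph :: "'a set \<Rightarrow> ('a \<Rightarrow> 'a \<Rightarrow> bool) \<Rightarrow> 'a set \<Rightarrow> bool" where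
  "is_S_graph VF EF X \<longleftrightarrow> X \<subseteq> VF \<and>
     (\<exists>ET m. tree X ET \<and> bij_betw m {{x, y} | x y. ET x y} (VF - X)
        \<and> (\<forall>u w. EF u w \<longleftrightarrow> (\<exists>x y. ET x y \<and>
               ((u = x \<and> w = m {x, y}) \<or> (u = m {x, y} \<and> w = x)))))"

definition subgraph :: "'a set \<Rightarrow> ('a \<Rightarrow> 'a \<Rightarrow> bool) \<Rightarrow> 'a set \<Rightarrow> ('a \<Rightarrow> 'a \<Rightarrow> bool) \<Rightarrow> bool" where
  "subgraph VF EF V E \<longleftrightarrow> graph VF EF \<and> VF \<subseteq> V \<and> (\<forall>u w. EF u w \<longrightarrow> E u w)"

definition substructure :: "'a set \<Rightarrow> ('a \<Rightarrow> 'a \<Rightarrow> bool) \<Rightarrow> 'a set \<Rightarrow> ('a \<Rightarrow> 'a \<Rightarrow> bool) \<Rightarrow> 'a set \<Rightarrow> bool" where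
  "substructure V E VF EF X \<longleftrightarrow> is_S_graph VF EF X \<and> subgraph VF EF V E
     \<and> (\<forall>v\<in>X. degree V E v = degree VF EF v)"

end

theory Submission
  imports Defs
begin

text \<open>Call a nonempty independent set X \<subseteq> V - D a trap if every neighbour of a vertex of X has
exactly two neighbours in X. The set X(F) of a substructure F with X(F) \<inter> D = {} is a trap.
Conversely, in a forest an inclusion-minimal trap X is X(F) for the substructure F spanned by X and
its neighbours: joining two vertices of X with a common neighbour gives a tree T with F = S(T),
connected by minimality and acyclic because a cycle of T subdivides to a cycle of the forest.

Staller wins from a trap: she picks x \<in> X with at most one neighbour that is not yet hers (a leaf of
the forest spanned by X and these neighbours). If there is such a neighbour m, she claims m first;
Dominator must answer at x, and X - {x} remains a trap in the new position. Otherwise claiming x wins.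

A forest without a trap has a matching covering V - D, by induction: delete a leaf in D (moving its
neighbour into D), or a leaf outside D together with its neighbour. Dominator then answers every move
with the partner of the claimed vertex.\<close>

section \<open>Graphs and forests\<close>

lemma graph_finite: "graph V E \<Longrightarrow> finite V"
  unfolding graph_def by blast

lemma graph_sym: "graph V E \<Longrightarrow> E u v \<Longrightarrow> E v u"
  unfolding graph_def by blast

lemma graph_irrefl: "graph V E \<Longrightarrow> \<not> E u u"
  unfolding graph_def by blast

lemma graph_edge_in: "graph V E \<Longrightarrow> E u v \<Longrightarrow> u \<in> V \<and> v \<in> V"
  unfolding graph_def by blast

lemma nbhd_graph: "graph V E \<Longrightarrow> nbhd V E x = {u. E x u}"
  unfolding nbhd_def graph_def by auto

lemma finite_neighbours: "graph V E \<Longrightarrow> finite {u. E x u}"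
  using graph_finite graph_edge_in by (metis (mono_tags) finite_subset mem_Collect_eq subsetI)

lemma neighbours_eq_singleton: "E x y \<Longrightarrow> card {z. E x z} = 1 \<Longrightarrow> {z. E x z} = {y}"
  by (metis (mono_tags, lifting) card_1_singletonE mem_Collect_eq singletonD)

definition cycle_free :: "('a \<Rightarrow> 'a \<Rightarrow> bool) \<Rightarrow> bool" where
  "cycle_free E \<longleftrightarrow> (\<nexists>cs. is_cycle E cs)"

lemma cycle_free_mono: "cycle_free E \<Longrightarrow> (\<And>a b. F a b \<Longrightarrow> E a b) \<Longrightarrow> cycle_free F"
  unfolding cycle_free_def is_cycle_def by blast

definition restrict_edges :: "'a set \<Rightarrow> ('a \<Rightarrow> 'a \<Rightarrow> bool) \<Rightarrow> 'a \<Rightarrow> 'a \<Rightarrow> bool" where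
  "restrict_edges W E a b \<longleftrightarrow> E a b \<and> a \<in> W \<and> b \<in> W"

lemma graph_restrict_edges: "graph V E \<Longrightarrow> W \<subseteq> V \<Longrightarrow> graph W (restrict_edges W E)"
  unfolding graph_def restrict_edges_def by (auto intro: finite_subset)

lemma cycle_free_restrict_edges: "cycle_free E \<Longrightarrow> cycle_free (restrict_edges W E)"
  using cycle_free_mono[of E "restrict_edges W E"] by (auto simp: restrict_edges_def)

lemma cycle_free_at_most_one_common_neighbour:
  assumes g: "graph V E" and a: "cycle_free E" and "x \<noteq> y"
    and "E x z" "E y z" "E x z'" "E y z'"
  shows "z = z'"
proof (rule ccontr)
  assume "z \<noteq> z'"
  have "is_cycle E [x, z, y, z']"
    unfolding is_cycle_def
  proof (intro conjI allI impI)
    show "distinct [x, z, y, z']" using assms \<open>z \<noteq> z'\<close> graph_irrefl[OF g] by auto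
    fix i assume "Suc i < length [x, z, y, z']"
    then have "i = 0 \<or> i = 1 \<or> i = 2" by auto
    then show "E ([x, z, y, z'] ! i) ([x, z, y, z'] ! Suc i)" using assms graph_sym[OF g \<open>E y z\<close>] by auto
  next
    show "E (last [x, z, y, z']) (hd [x, z, y, z'])" using graph_sym[OF g \<open>E x z'\<close>] by simp
  qed simp
  with a show False unfolding cycle_free_def by blast
qed

definition simple_path :: "('a \<Rightarrow> 'a \<Rightarrow> bool) \<Rightarrow> 'a list \<Rightarrow> bool" where
  "simple_path F ps \<longleftrightarrow> ps \<noteq> [] \<and> distinct ps \<and> (\<forall>i. Suc i < length ps \<longrightarrow> F (ps ! i) (ps ! Suc i))"

lemma is_cycle_take_simple_path:
  assumes p: "simple_path F ps" and j: "2 \<le> j" "j < length ps" and e: "F (ps ! j) (ps ! 0)"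
  shows "is_cycle F (take (Suc j) ps)"
  unfolding is_cycle_def
proof (intro conjI allI impI)
  show "3 \<le> length (take (Suc j) ps)" "distinct (take (Suc j) ps)"
    using p j unfolding simple_path_def by auto
  show "F (take (Suc j) ps ! i) (take (Suc j) ps ! Suc i)" if "Suc i < length (take (Suc j) ps)" for i
    using p that unfolding simple_path_def by auto
  have "last (take (Suc j) ps) = ps ! j" "hd (take (Suc j) ps) = ps ! 0"
    using j by (simp_all add: take_Suc_conv_app_nth hd_conv_nth nth_append)
  then show "F (last (take (Suc j) ps)) (hd (take (Suc j) ps))"
    using e by simp
qed

text \<open>The first vertex of a longest path is a leaf.\<close>
lemma cycle_free_graph_has_leaf:
  assumes g: "graph W F" and a: "cycle_free F" and ne: "W \<noteq> {}"
  shows "\<exists>w\<in>W. card (nbhd W F w) \<le> 1"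
proof -
  let ?P = "\<lambda>k. \<exists>ps. simple_path F ps \<and> set ps \<subseteq> W \<and> length ps = k"
  from ne obtain w0 where "w0 \<in> W" by auto
  then have P1: "?P 1" by (intro exI[of _ "[w0]"]) (auto simp: simple_path_def)
  have bound: "\<forall>k. ?P k \<longrightarrow> k \<le> card W"
  proof (intro allI impI)
    fix k assume "?P k"
    then obtain ps where "distinct ps" "set ps \<subseteq> W" "length ps = k"
      unfolding simple_path_def by blast
    then show "k \<le> card W" using card_mono[OF graph_finite[OF g]] by (metis distinct_card)
  qed
  obtain k where "?P k" and kmax: "\<forall>k'. ?P k' \<longrightarrow> k' \<le> k"
    using Nat.ex_has_greatest_nat[OF P1 bound] by blast
  then obtain ps where ps: "simple_path F ps" "set ps \<subseteq> W" "length ps = k" by blast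
  then have ne_ps: "ps \<noteq> []" unfolding simple_path_def by simp
  have "nbhd W F (ps ! 0) \<subseteq> {ps ! 1}"
  proof
    fix u assume "u \<in> nbhd W F (ps ! 0)"
    then have Fu: "F (ps ! 0) u" and uW: "u \<in> W" unfolding nbhd_def by auto
    have "u \<in> set ps"
    proof (rule ccontr)
      assume "u \<notin> set ps"
      then have "simple_path F (u # ps)"
        using ps graph_sym[OF g Fu] unfolding simple_path_def by (auto simp: nth_Cons split: nat.splits)
      then have "?P (Suc k)" using ps uW by (intro exI[of _ "u # ps"]) auto
      with kmax show False by auto
    qed
    then obtain j where j: "j < length ps" "ps ! j = u" by (auto simp: in_set_conv_nth)
    have "j \<noteq> 0"
    proof
      assume "j = 0"
      with j(2) Fu show False using graph_irrefl[OF g] by simp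
    qed
    moreover have "\<not> 2 \<le> j"
    proof
      assume "2 \<le> j"
      moreover have "F (ps ! j) (ps ! 0)" using j(2) graph_sym[OF g Fu] by simp
      ultimately have "is_cycle F (take (Suc j) ps)" by (rule is_cycle_take_simple_path[OF ps(1) _ j(1)])
      with a show False unfolding cycle_free_def by blast
    qed
    ultimately show "u \<in> {ps ! 1}" using j by (simp add: numeral_2_eq_2 not_le less_Suc_eq)
  qed
  then have "card (nbhd W F (ps ! 0)) \<le> 1"
    using card_mono[of "{ps ! 1}"] by auto
  moreover have "ps ! 0 \<in> W" using ps ne_ps by auto
  ultimately show ?thesis by blast
qed

section \<open>The game\<close>

lemma staller_final_mono: "staller_final V E D S \<Longrightarrow> S \<subseteq> S' \<Longrightarrow> staller_final V E D S'"
  unfolding staller_final_def by blast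

lemma mbd_win_if_staller_final:
  "staller_final V E D S \<Longrightarrow> finite U \<Longrightarrow> card U = n \<Longrightarrow> mbd_win V E D n S U t"
proof (induction n arbitrary: S U t)
  case 0
  then show ?case by simp
next
  case (Suc n)
  then obtain u where u: "u \<in> U" by fastforce
  then have "mbd_win V E D n (insert u S) (U - {u}) False"
    using Suc.IH[of "insert u S" "U - {u}" False] Suc.prems staller_final_mono[of V E D S "insert u S"]
    by auto
  moreover have "\<forall>u\<in>U. mbd_win V E D n S (U - {u}) True"
    using Suc by auto
  ultimately show ?case using u by (cases t) auto
qed

lemma mbd_win_by_final_move:
  assumes "x \<in> U" "finite U" "card U = n" "staller_final V E D (insert x S)"
  shows "mbd_win V E D n S U True"
proof -
  obtain n' where "n = Suc n'" "card (U - {x}) = n'" using assms(1-3) by (cases n) auto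
  then show ?thesis using assms mbd_win_if_staller_final[of V E D "insert x S" "U - {x}"] by auto
qed

lemma staller_final_insert:
  "x \<in> V - D \<Longrightarrow> graph V E \<Longrightarrow> {z. E x z} \<subseteq> T \<Longrightarrow> staller_final V E D (insert x T)"
  unfolding staller_final_def closed_nbhd_def by (auto simp: nbhd_graph)

section \<open>Dominator's pairing strategy\<close>

definition matching :: "('a \<Rightarrow> 'a \<Rightarrow> bool) \<Rightarrow> ('a \<Rightarrow> 'a \<Rightarrow> bool) \<Rightarrow> bool" where
  "matching E P \<longleftrightarrow> (\<forall>u v. P u v \<longrightarrow> E u v) \<and> (\<forall>u v. P u v \<longrightarrow> P v u)
     \<and> (\<forall>u v w. P u v \<longrightarrow> P u w \<longrightarrow> v = w)"

definition pairing :: "'a set \<Rightarrow> ('a \<Rightarrow> 'a \<Rightarrow> bool) \<Rightarrow> 'a set \<Rightarrow> ('a \<Rightarrow> 'a \<Rightarrow> bool) \<Rightarrow> bool" where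
  "pairing V E D P \<longleftrightarrow> matching E P \<and> (\<forall>v\<in>V - D. \<exists>w. P v w)"

lemma matching_restrict_edges: "matching (restrict_edges W E) P \<Longrightarrow> matching E P"
  unfolding matching_def restrict_edges_def by blast

lemma pairing_add_edge:
  assumes g: "graph V E" and "matching E P" and ab: "E a b" and "\<And>x. \<not> P a x" "\<And>x. \<not> P b x"
    and "\<forall>v\<in>V - D. v = a \<or> v = b \<or> (\<exists>x. P v x)"
  shows "pairing V E D (\<lambda>u v. P u v \<or> (u = a \<and> v = b) \<or> (u = b \<and> v = a))"
  using assms graph_sym[OF g ab] unfolding pairing_def matching_def by blast

text \<open>S are Staller's and U the unclaimed vertices; the vertices outside S \<union> U are Dominator's.\<close>
definition pairs_guarded :: "('a \<Rightarrow> 'a \<Rightarrow> bool) \<Rightarrow> 'a set \<Rightarrow> 'a set \<Rightarrow> bool" where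
  "pairs_guarded P S U \<longleftrightarrow>
     (\<forall>u v. P u v \<longrightarrow> (u \<in> U \<and> v \<in> U) \<or> (u \<notin> S \<and> u \<notin> U) \<or> (v \<notin> S \<and> v \<notin> U))"

lemma pairing_not_staller_final:
  assumes g: "graph V E" and p: "pairing V E D P" and guard: "pairs_guarded P S U"
    and disj: "S \<inter> U = {}" and A: "A \<subseteq> U" "\<forall>a\<in>A. \<forall>b\<in>A. a = b"
  shows "\<not> staller_final V E D (S \<union> A)"
proof
  assume "staller_final V E D (S \<union> A)"
  then obtain v where v: "v \<in> V - D" "closed_nbhd V E v \<subseteq> S \<union> A"
    unfolding staller_final_def by blast
  then obtain w where P: "P v w" using p unfolding pairing_def by blast
  then have "E v w" using p unfolding pairing_def matching_def by blast
  then have vw: "v \<in> S \<union> A" "w \<in> S \<union> A" "v \<noteq> w"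
    using v graph_irrefl[OF g] unfolding closed_nbhd_def nbhd_graph[OF g] by auto
  have "(v \<in> U \<and> w \<in> U) \<or> v \<notin> S \<union> U \<or> w \<notin> S \<union> U"
    using guard P unfolding pairs_guarded_def by blast
  then have "v \<in> A" "w \<in> A" using vw A(1) disj by auto
  with A(2) vw(3) show False by blast
qed

lemma pairs_guarded_answer:
  assumes m: "matching E P" and irr: "\<And>a. \<not> E a a"
    and guard: "pairs_guarded P S U" and disj: "S \<inter> U = {}"
    and u: "u \<in> U" and y: "y \<in> U - {u}" and partner: "\<And>p. P u p \<Longrightarrow> p \<in> U - {u} \<Longrightarrow> y = p"
  shows "pairs_guarded P (insert u S) (U - {u} - {y})"
  unfolding pairs_guarded_def
proof (intro allI impI)
  fix a b assume Pab: "P a b"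
  have old: "(a \<in> U \<and> b \<in> U) \<or> a \<notin> S \<union> U \<or> b \<notin> S \<union> U"
    using guard Pab unfolding pairs_guarded_def by blast
  have "a \<noteq> b" using Pab m irr unfolding matching_def by blast
  have Pba: "P b a" using Pab m unfolding matching_def by blast
  let ?U' = "U - {u} - {y}"
  show "(a \<in> ?U' \<and> b \<in> ?U') \<or> (a \<notin> insert u S \<and> a \<notin> ?U') \<or> (b \<notin> insert u S \<and> b \<notin> ?U')"
  proof (cases "a \<in> U \<and> b \<in> U")
    case True
    then have "a \<notin> S" "b \<notin> S" using disj by auto
    moreover have "a = u \<Longrightarrow> y = b" "b = u \<Longrightarrow> y = a"
      using True partner Pab Pba \<open>a \<noteq> b\<close> by blast+
    ultimately show ?thesis using True \<open>a \<noteq> b\<close> by blast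
  next
    case False
    then have "a \<notin> S \<union> U \<or> b \<notin> S \<union> U" using old by blast
    then show ?thesis using u by blast
  qed
qed

lemma matching_partner_choice:
  assumes "matching E P" and "u \<in> U" and "U - {u} \<noteq> {}"
  shows "\<exists>y\<in>U - {u}. \<forall>p. P u p \<longrightarrow> p \<in> U - {u} \<longrightarrow> y = p"
proof (cases "\<exists>p. P u p \<and> p \<in> U - {u}")
  case True
  then obtain p where "P u p" "p \<in> U - {u}" by blast
  moreover have "\<And>p'. P u p' \<Longrightarrow> p = p'" using \<open>P u p\<close> assms(1) unfolding matching_def by blast
  ultimately show ?thesis by blast
next
  case False
  then show ?thesis using assms(3) by blast
qed

lemma pairing_blocks_staller:
  assumes g: "graph V E" and p: "pairing V E D P"
  shows "finite U \<Longrightarrow> card U = n \<Longrightarrow> S \<inter> U = {} \<Longrightarrow> pairs_guarded P S U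
    \<Longrightarrow> \<not> mbd_win V E D n S U True"
proof (induction n arbitrary: S U rule: less_induct)
  case (less n)
  show ?case
  proof
    assume win: "mbd_win V E D n S U True"
    show False
    proof (cases n)
      case 0
      then show False
        using win pairing_not_staller_final[OF g p less.prems(4,3), of "{}"] by simp
    next
      case (Suc n')
      then obtain u where u: "u \<in> U" and win': "mbd_win V E D n' (insert u S) (U - {u}) False"
        using win by auto
      show False
      proof (cases n')
        case 0
        then show False
          using win' u pairing_not_staller_final[OF g p less.prems(4,3), of "{u}"] by simp
      next
        case (Suc k)
        have cU: "card (U - {u}) = Suc k" using less.prems u \<open>n = Suc n'\<close> Suc by simp
        then have "U - {u} \<noteq> {}" by (metis card.empty nat.distinct(1))
        moreover have m: "matching E P" using p unfolding pairing_def by blast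
        ultimately obtain y where y: "y \<in> U - {u}" and partner: "\<forall>p. P u p \<longrightarrow> p \<in> U - {u} \<longrightarrow> y = p"
          using matching_partner_choice u by metis
        have "mbd_win V E D k (insert u S) (U - {u} - {y}) True"
          using win' y Suc by simp
        moreover have "pairs_guarded P (insert u S) (U - {u} - {y})"
          using pairs_guarded_answer[OF m graph_irrefl[OF g] less.prems(4,3) u y] partner by blast
        moreover have "card (U - {u} - {y}) = k" using cU y less.prems(1) by simp
        ultimately show False
          using less.IH[of k "U - {u} - {y}" "insert u S"] less.prems \<open>n = Suc n'\<close> Suc by auto
      qed
    qed
  qed
qed

lemma pairing_dominator_wins:
  assumes "graph V E" and "pairing V E D P"
  shows "\<not> staller_wins_MBD V E D"
proof -
  have "pairs_guarded P {} V"
    using assms graph_edge_in unfolding pairs_guarded_def pairing_def matching_def by blast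
  then show ?thesis
    using pairing_blocks_staller[OF assms] graph_finite[OF assms(1)]
    unfolding staller_wins_MBD_def by simp
qed

section \<open>Traps and Staller's strategy\<close>

definition trap :: "'a set \<Rightarrow> ('a \<Rightarrow> 'a \<Rightarrow> bool) \<Rightarrow> 'a set \<Rightarrow> 'a set \<Rightarrow> bool" where
  "trap V E D X \<longleftrightarrow> X \<noteq> {} \<and> X \<subseteq> V \<and> X \<inter> D = {} \<and> (\<forall>x\<in>X. \<forall>y\<in>X. \<not> E x y)
     \<and> (\<forall>x\<in>X. \<forall>z. E x z \<longrightarrow> card {y\<in>X. E y z} = 2)"

text \<open>Invariant of Staller's strategy (S her vertices, U the unclaimed ones): no neighbour of X
is Dominator's, and only the neighbours she does not own yet need two neighbours in X.\<close>
definition live_trap :: "'a set \<Rightarrow> ('a \<Rightarrow> 'a \<Rightarrow> bool) \<Rightarrow> 'a set \<Rightarrow> 'a set \<Rightarrow> 'a set \<Rightarrow> 'a set \<Rightarrow> bool" where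
  "live_trap V E D S U X \<longleftrightarrow> X \<noteq> {} \<and> X \<subseteq> U \<and> X \<subseteq> V \<and> X \<inter> D = {} \<and> (\<forall>x\<in>X. \<forall>y\<in>X. \<not> E x y)
     \<and> (\<forall>x\<in>X. \<forall>z. E x z \<longrightarrow> z \<in> S \<union> U)
     \<and> (\<forall>x\<in>X. \<forall>z. E x z \<longrightarrow> z \<notin> S \<longrightarrow> card {y\<in>X. E y z} = 2)"

lemma live_trap_initial:
  assumes g: "graph V E" and "trap V E D X"
  shows "live_trap V E D {} V X"
proof -
  have "\<forall>x\<in>X. \<forall>z. E x z \<longrightarrow> z \<in> {} \<union> V" using graph_edge_in[OF g] by blast
  with assms(2) show ?thesis unfolding trap_def live_trap_def by blast
qed

text \<open>A leaf of the forest formed by X and its neighbours outside S.\<close>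
lemma live_trap_sparse_vertex:
  assumes g: "graph V E" and a: "cycle_free E" and t: "live_trap V E D S U X"
  shows "\<exists>x\<in>X. card {z. E x z \<and> z \<notin> S} \<le> 1"
proof -
  define M where "M = {z. z \<notin> S \<and> (\<exists>x\<in>X. E x z)}"
  define F where "F = (\<lambda>a b. E a b \<and> (a \<in> X \<and> b \<in> M \<or> a \<in> M \<and> b \<in> X))"
  have "M \<subseteq> V" unfolding M_def using graph_edge_in[OF g] by blast
  moreover have "X \<subseteq> V" using t unfolding live_trap_def by blast
  ultimately have fin_XM: "finite (X \<union> M)" using graph_finite[OF g] finite_subset by blast
  have gF: "graph (X \<union> M) F"
    using fin_XM graph_sym[OF g] graph_irrefl[OF g] unfolding graph_def F_def by blast
  have aF: "cycle_free F" using cycle_free_mono[OF a, of F] unfolding F_def by blast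
  have "X \<union> M \<noteq> {}" using t unfolding live_trap_def by auto
  then obtain w where w: "w \<in> X \<union> M" "card (nbhd (X \<union> M) F w) \<le> 1"
    using cycle_free_graph_has_leaf[OF gF aF] by blast
  have fin: "finite (nbhd (X \<union> M) F w)" using finite_neighbours[OF gF] nbhd_graph[OF gF] by simp
  have "w \<notin> M"
  proof
    assume wM: "w \<in> M"
    then have "card {y\<in>X. E y w} = 2" using t unfolding M_def live_trap_def by blast
    moreover have "{y\<in>X. E y w} \<subseteq> nbhd (X \<union> M) F w"
      using wM graph_sym[OF g] unfolding nbhd_def F_def by blast
    then have "card {y\<in>X. E y w} \<le> card (nbhd (X \<union> M) F w)" by (rule card_mono[OF fin])
    ultimately show False using w(2) by simp
  qed
  with w(1) have wX: "w \<in> X" by blast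
  then have "{z. E w z \<and> z \<notin> S} \<subseteq> nbhd (X \<union> M) F w" unfolding nbhd_def F_def M_def by auto
  then have "card {z. E w z \<and> z \<notin> S} \<le> 1" using card_mono[OF fin] w(2) by (meson le_trans)
  with wX show ?thesis by blast
qed

text \<open>Staller claims the only free neighbour m of x; if Dominator answers at x, the vertex x
is lost but m is Staller's, so the rest of X is still a live trap.\<close>
lemma live_trap_after_answer:
  assumes g: "graph V E" and t: "live_trap V E D S U X" and x: "x \<in> X"
    and m: "{z. E x z \<and> z \<notin> S} = {m}"
  shows "live_trap V E D (insert m S) (U - {m} - {x}) (X - {x})"
  unfolding live_trap_def
proof (intro conjI ballI allI impI)
  have "m \<notin> S" "E x m" using m by auto
  then have "card {y\<in>X. E y m} = 2" using t x unfolding live_trap_def by blast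
  then obtain p q where "{y\<in>X. E y m} = {p, q}" "p \<noteq> q" by (meson card_2_iff)
  then obtain x' where "x' \<in> X" "x' \<noteq> x" by blast
  then show "X - {x} \<noteq> {}" by blast
  have "m \<notin> X" using t x \<open>E x m\<close> unfolding live_trap_def by blast
  then show "X - {x} \<subseteq> U - {m} - {x}" using t unfolding live_trap_def by blast
  show "X - {x} \<subseteq> V" "(X - {x}) \<inter> D = {}" "\<And>a b. a \<in> X - {x} \<Longrightarrow> b \<in> X - {x} \<Longrightarrow> \<not> E a b"
    using t unfolding live_trap_def by blast+
  fix x' z assume x': "x' \<in> X - {x}" and z: "E x' z"
  have "z \<noteq> x" using t x x' z unfolding live_trap_def by blast
  moreover have "z \<in> S \<union> U" using t x' z unfolding live_trap_def by blast
  ultimately show "z \<in> insert m S \<union> (U - {m} - {x})" by blast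
  assume "z \<notin> insert m S"
  then have "{y\<in>X - {x}. E y z} = {y\<in>X. E y z}" using m by auto
  moreover have "card {y\<in>X. E y z} = 2"
    using t x' z \<open>z \<notin> insert m S\<close> unfolding live_trap_def by blast
  ultimately show "card {y\<in>X - {x}. E y z} = 2" by simp
qed

lemma live_trap_staller_wins:
  assumes g: "graph V E" and a: "cycle_free E"
  shows "finite U \<Longrightarrow> card U = n \<Longrightarrow> live_trap V E D S U X \<Longrightarrow> mbd_win V E D n S U True"
proof (induction n arbitrary: S U X rule: less_induct)
  case (less n)
  note t = \<open>live_trap V E D S U X\<close>
  obtain x where x: "x \<in> X" and sparse: "card {z. E x z \<and> z \<notin> S} \<le> 1"
    using live_trap_sparse_vertex[OF g a t] by blast
  have xU: "x \<in> U" and xVD: "x \<in> V - D" using t x unfolding live_trap_def by blast+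
  have win_at_x: "staller_final V E D (insert x T)" if "{z. E x z \<and> z \<notin> S} \<subseteq> T" "S \<subseteq> T" for T
    using staller_final_insert[OF xVD g] that by blast
  show ?case
  proof (cases "{z. E x z \<and> z \<notin> S} = {}")
    case True
    then show ?thesis using mbd_win_by_final_move[OF xU less.prems(1,2) win_at_x[of S]] by blast
  next
    case False
    have "finite {z. E x z \<and> z \<notin> S}"
      using finite_neighbours[OF g, of x] by (rule finite_subset[rotated]) blast
    with False have "card {z. E x z \<and> z \<notin> S} \<noteq> 0" by simp
    with sparse have "card {z. E x z \<and> z \<notin> S} = 1" by linarith
    then obtain m where m: "{z. E x z \<and> z \<notin> S} = {m}" by (metis One_nat_def card_1_singleton_iff)
    then have "E x m" "m \<notin> S" by auto
    then have mU: "m \<in> U" and "m \<noteq> x" using t x graph_irrefl[OF g] unfolding live_trap_def by blast+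
    have "card (U - {m}) \<noteq> 0" using less.prems(1) xU \<open>m \<noteq> x\<close> by auto
    then obtain k where card_m: "card (U - {m}) = Suc k" using not0_implies_Suc by blast
    then have k: "n = Suc (Suc k)" using less.prems(1,2) mU by (auto simp: card_Diff_singleton)
    have "mbd_win V E D k (insert m S) (U - {m} - {y}) True" if y: "y \<in> U - {m}" for y
    proof -
      have card_y: "card (U - {m} - {y}) = k" using card_m y less.prems(1) by auto
      show ?thesis
      proof (cases "y = x")
        case True
        have "live_trap V E D (insert m S) (U - {m} - {y}) (X - {x})"
          using live_trap_after_answer[OF g t x m] True by (simp add: insert_commute Diff_insert[symmetric])
        then show ?thesis using less.IH[of k] k card_y less.prems(1) by auto
      next
        case False
        then have "x \<in> U - {m} - {y}" using xU \<open>m \<noteq> x\<close> by blast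
        moreover have "finite (U - {m} - {y})" using less.prems(1) by blast
        moreover have "staller_final V E D (insert x (insert m S))" using win_at_x m by auto
        ultimately show ?thesis by (rule mbd_win_by_final_move[OF _ _ card_y])
      qed
    qed
    then show ?thesis using k mU by auto
  qed
qed

lemma trap_staller_wins:
  assumes "graph V E" and "cycle_free E" and "trap V E D X"
  shows "staller_wins_MBD V E D"
  unfolding staller_wins_MBD_def
  using live_trap_staller_wins[OF assms(1,2) graph_finite[OF assms(1)]] live_trap_initial[OF assms(1,3)]
  by blast

section \<open>Forests without traps\<close>

text \<open>Take a leaf w of the forest of non-leaves; a vertex of degree at least two has a leaf
neighbour.\<close>
lemma inner_vertex_imp_support_vertex:
  assumes g: "graph V E" and a: "cycle_free E" and v: "v \<in> V" "2 \<le> card {z. E v z}"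
  shows "\<exists>v1 v0. E v1 v0 \<and> {z. E v0 z} = {v1} \<and> card {z. E v1 z \<and> card {y. E z y} \<noteq> 1} \<le> 1"
proof -
  define W where "W = {v\<in>V. 2 \<le> card {z. E v z}}"
  have gW: "graph W (restrict_edges W E)" using graph_restrict_edges[OF g] W_def by auto
  have "W \<noteq> {}" using v unfolding W_def by blast
  then obtain w where w: "w \<in> W" "card (nbhd W (restrict_edges W E) w) \<le> 1"
    using cycle_free_graph_has_leaf[OF gW cycle_free_restrict_edges[OF a]] by blast
  have nz: "card {z. E x z} \<noteq> 0" if "E x y" for x y
    using that finite_neighbours[OF g] by (metis card_0_eq empty_iff mem_Collect_eq)
  have inner: "{z. E w z \<and> card {y. E z y} \<noteq> 1} = nbhd W (restrict_edges W E) w"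
  proof -
    have "card {y. E z y} \<noteq> 1 \<longleftrightarrow> z \<in> W" if "E w z" for z
      using that nz graph_sym[OF g] graph_edge_in[OF g] unfolding W_def by fastforce
    then show ?thesis unfolding nbhd_def restrict_edges_def using w(1) by auto
  qed
  have "\<exists>v0. E w v0 \<and> card {y. E v0 y} = 1"
  proof (rule ccontr)
    assume "\<not> ?thesis"
    then have "{z. E w z} \<subseteq> nbhd W (restrict_edges W E) w" using inner by auto
    then have "card {z. E w z} \<le> 1"
      using w(2) card_mono[OF finite_neighbours[OF gW]] nbhd_graph[OF gW] by (metis le_trans)
    then show False using w(1) unfolding W_def by auto
  qed
  then obtain v0 where v0: "E w v0" "card {y. E v0 y} = 1" by blast
  have "E w v0 \<and> {z. E v0 z} = {w} \<and> card {z. E w z \<and> card {y. E z y} \<noteq> 1} \<le> 1"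
    using v0(1) neighbours_eq_singleton[of E v0 w, OF graph_sym[OF g v0(1)] v0(2)] inner w(2) by simp
  then show ?thesis by blast
qed

lemma edge_imp_support_vertex:
  assumes g: "graph V E" and a: "cycle_free E" and e: "E a b"
  shows "\<exists>v1 v0. E v1 v0 \<and> {z. E v0 z} = {v1} \<and> card {z. E v1 z \<and> card {y. E z y} \<noteq> 1} \<le> 1"
proof (cases "2 \<le> card {z. E a z} \<or> 2 \<le> card {z. E b z}")
  case True
  then show ?thesis
    using inner_vertex_imp_support_vertex[OF g a] graph_edge_in[OF g e] by blast
next
  case False
  have "card {z. E a z} \<noteq> 0" "card {z. E b z} \<noteq> 0"
    using e graph_sym[OF g e] finite_neighbours[OF g] by (metis card_0_eq empty_iff mem_Collect_eq)+
  with False have "{z. E a z} = {b}" "{z. E b z} = {a}"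
    using neighbours_eq_singleton[of E a b] neighbours_eq_singleton[of E b a] e graph_sym[OF g e]
    by simp_all
  moreover have "{z. E a z \<and> card {y. E z y} \<noteq> 1} \<subseteq> {b}" using \<open>{z. E a z} = {b}\<close> by blast
  then have "card {z. E a z \<and> card {y. E z y} \<noteq> 1} \<le> 1" using card_mono[of "{b}"] by simp
  ultimately show ?thesis using e by blast
qed

lemma trap_of_restrict_edges:
  assumes t: "trap W (restrict_edges W E) D' X" and "W \<subseteq> V" and "D \<subseteq> D'"
    and closed: "\<forall>x\<in>X. \<forall>z. E x z \<longrightarrow> z \<in> W"
  shows "trap V E D X"
  unfolding trap_def
proof (intro conjI ballI allI impI)
  have XW: "X \<subseteq> W" using t unfolding trap_def by blast
  show "X \<noteq> {}" using t unfolding trap_def by blast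
  show "X \<subseteq> V" "X \<inter> D = {}" using t XW assms(2,3) unfolding trap_def by blast+
  fix x assume x: "x \<in> X"
  show "\<not> E x y" if "y \<in> X" for y
    using t x that XW unfolding trap_def restrict_edges_def by blast
  fix z assume "E x z"
  then have "restrict_edges W E x z" and "{y\<in>X. E y z} = {y\<in>X. restrict_edges W E y z}"
    using XW closed x unfolding restrict_edges_def by blast+
  then show "card {y\<in>X. E y z} = 2" using t x unfolding trap_def by simp
qed

lemma trap_twin_leaves:
  assumes v0: "{z. E v0 z} = {v1}" and l: "{z. E l z} = {v1}" and "v0 \<noteq> l"
    and "v0 \<in> V - D" "l \<in> V - D" and "\<not> E v1 v1"
  shows "trap V E D {v0, l}"
  unfolding trap_def
proof (intro conjI ballI allI impI)
  fix x z assume "x \<in> {v0, l}" "E x z"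
  then have "z = v1" using v0 l by blast
  then have "{y\<in>{v0, l}. E y z} = {v0, l}" using v0 l by auto
  then show "card {y\<in>{v0, l}. E y z} = 2" using \<open>v0 \<noteq> l\<close> by simp
qed (use assms in auto)

lemma trap_insert_leaf:
  assumes g: "graph V E" and t: "trap (V - {v0, v1}) (restrict_edges (V - {v0, v1}) E) D X"
    and v0: "v0 \<in> V - D" "{z. E v0 z} = {v1}"
    and x2: "x2 \<in> X" "E x2 v1" and unique: "\<And>x. x \<in> X \<Longrightarrow> E x v1 \<Longrightarrow> x = x2"
  shows "trap V E D (insert v0 X)"
  unfolding trap_def
proof (intro conjI ballI allI impI)
  have XV: "X \<subseteq> V - {v0, v1}" using t unfolding trap_def by blast
  have E01: "E v0 v1" using v0(2) by blast
  have not_v0: "\<not> E x v0" if "x \<in> X" for x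
    using that XV v0(2) graph_sym[OF g, of x v0] by blast
  show "insert v0 X \<noteq> {}" by simp
  show "insert v0 X \<subseteq> V" "insert v0 X \<inter> D = {}" using XV v0(1) t unfolding trap_def by auto
  fix x assume x: "x \<in> insert v0 X"
  have indep: "\<not> E x y" if "x \<in> X" "y \<in> X" for x y
    using t that XV unfolding trap_def restrict_edges_def by blast
  have v0_nb: "y = v1" if "E v0 y" for y using that v0(2) by blast
  show "\<not> E x y" if "y \<in> insert v0 X" for y
    using x that indep not_v0 v0_nb XV graph_irrefl[OF g] by blast
  fix z assume xz: "E x z"
  show "card {y\<in>insert v0 X. E y z} = 2"
  proof (cases "z = v1")
    case True
    then have "{y\<in>insert v0 X. E y z} = {v0, x2}" using E01 x2 unique by blast
    moreover have "x2 \<noteq> v0" using x2(1) XV by blast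
    ultimately show ?thesis by simp
  next
    case False
    then have xX: "x \<in> X" using x xz v0(2) by blast
    then have zW: "z \<in> V - {v0, v1}"
      using False not_v0 xz graph_edge_in[OF g xz] by blast
    have "{y\<in>insert v0 X. E y z} = {y\<in>X. restrict_edges (V - {v0, v1}) E y z}"
      using False v0(2) zW XV unfolding restrict_edges_def by auto
    moreover have "restrict_edges (V - {v0, v1}) E x z" using xz zW xX XV unfolding restrict_edges_def by blast
    ultimately show ?thesis using t xX unfolding trap_def by simp
  qed
qed

lemma trap_or_pairing_remove_leaf_in_D:
  assumes g: "graph V E" and u: "u \<in> D" "{z. E u z} = {w}"
    and IH: "(\<exists>X. trap (V - {u}) (restrict_edges (V - {u}) E) (insert w D) X)
      \<or> (\<exists>P. pairing (V - {u}) (restrict_edges (V - {u}) E) (insert w D) P)"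
  shows "(\<exists>X. trap V E D X) \<or> (\<exists>P. pairing V E D P)"
  using IH
proof (elim disjE exE)
  fix X assume X: "trap (V - {u}) (restrict_edges (V - {u}) E) (insert w D) X"
  then have "\<forall>x\<in>X. \<forall>z. E x z \<longrightarrow> z \<in> V - {u}"
    using u(2) graph_sym[OF g] graph_edge_in[OF g] unfolding trap_def by blast
  then have "trap V E D X" by (rule trap_of_restrict_edges[OF X Diff_subset subset_insertI])
  then show ?thesis by blast
next
  fix P assume P: "pairing (V - {u}) (restrict_edges (V - {u}) E) (insert w D) P"
  then have m: "matching E P" and cover: "\<forall>v\<in>V - D. v = w \<or> (\<exists>x. P v x)"
    and free: "\<And>x. \<not> P u x"
    using matching_restrict_edges u(1) unfolding pairing_def matching_def restrict_edges_def by blast+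
  show ?thesis
  proof (cases "\<exists>x. P w x")
    case True
    then have "pairing V E D P" using m cover unfolding pairing_def by fastforce
    then show ?thesis by blast
  next
    case False
    moreover have "E u w" using u(2) by blast
    moreover have "\<forall>v\<in>V - D. v = u \<or> v = w \<or> (\<exists>x. P v x)" using cover by blast
    ultimately show ?thesis using pairing_add_edge[OF g m _ free] by blast
  qed
qed

lemma at_most_one_inner_neighbour:
  assumes g: "graph V E" and inner: "card {z. E v z \<and> card {y. E z y} \<noteq> 1} \<le> 1"
    and "E x v" "E x' v" "card {y. E x y} \<noteq> 1" "card {y. E x' y} \<noteq> 1"
  shows "x = x'"
proof -
  have "{x, x'} \<subseteq> {z. E v z \<and> card {y. E z y} \<noteq> 1}" using assms graph_sym[OF g] by blast
  moreover have "finite {z. E v z \<and> card {y. E z y} \<noteq> 1}"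
    using finite_neighbours[OF g, of v] by (rule finite_subset[rotated]) blast
  ultimately have "card {x, x'} \<le> 1" using card_mono inner by (metis le_trans)
  then show ?thesis by (cases "x = x'") auto
qed

lemma trap_or_pairing_remove_leaf_pair:
  assumes g: "graph V E" and v0: "v0 \<in> V - D" "{z. E v0 z} = {v1}"
    and inner: "card {z. E v1 z \<and> card {y. E z y} \<noteq> 1} \<le> 1"
    and one_leaf: "\<And>l. {z. E l z} = {v1} \<Longrightarrow> l = v0"
    and IH: "(\<exists>X. trap (V - {v0, v1}) (restrict_edges (V - {v0, v1}) E) D X)
      \<or> (\<exists>P. pairing (V - {v0, v1}) (restrict_edges (V - {v0, v1}) E) D P)"
  shows "(\<exists>X. trap V E D X) \<or> (\<exists>P. pairing V E D P)"
  using IH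
proof (elim disjE exE)
  fix X assume X: "trap (V - {v0, v1}) (restrict_edges (V - {v0, v1}) E) D X"
  have XV: "X \<subseteq> V - {v0, v1}" using X unfolding trap_def by blast
  have not_v0: "\<not> E x v0" if "x \<in> X" for x
    using that XV v0(2) graph_sym[OF g, of x v0] by blast
  show ?thesis
  proof (cases "\<exists>x2\<in>X. E x2 v1")
    case False
    then have "\<forall>x\<in>X. \<forall>z. E x z \<longrightarrow> z \<in> V - {v0, v1}"
      using not_v0 graph_edge_in[OF g] by blast
    then have "trap V E D X" by (rule trap_of_restrict_edges[OF X Diff_subset subset_refl])
    then show ?thesis by blast
  next
    case True
    then obtain x2 where x2: "x2 \<in> X" "E x2 v1" by blast
    have "card {y. E x y} \<noteq> 1" if "x \<in> X" "E x v1" for x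
      using neighbours_eq_singleton[of E x v1] one_leaf that XV by blast
    then have "x = x2" if "x \<in> X" "E x v1" for x
      using at_most_one_inner_neighbour[OF g inner] that x2 by blast
    then have "trap V E D (insert v0 X)" using trap_insert_leaf[OF g X v0 x2] by blast
    then show ?thesis by blast
  qed
next
  fix P assume P: "pairing (V - {v0, v1}) (restrict_edges (V - {v0, v1}) E) D P"
  then have m: "matching E P" and cover: "\<forall>v\<in>V - D. v = v0 \<or> v = v1 \<or> (\<exists>x. P v x)"
    and free: "\<And>x. \<not> P v0 x" "\<And>x. \<not> P v1 x"
    using matching_restrict_edges unfolding pairing_def matching_def restrict_edges_def by blast+
  have "E v0 v1" using v0(2) by blast
  from pairing_add_edge[OF g m this free cover] show ?thesis by blast
qed

lemma trap_or_pairing: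
  assumes "graph V E" and "cycle_free E"
  shows "(\<exists>X. trap V E D X) \<or> (\<exists>P. pairing V E D P)"
  using assms
proof (induction "card V" arbitrary: V E D rule: less_induct)
  case less
  have g: "graph V E" and a: "cycle_free E" by fact+
  have restrict: "graph (V - R) (restrict_edges (V - R) E)" "cycle_free (restrict_edges (V - R) E)" for R
    using graph_restrict_edges[OF g] cycle_free_restrict_edges[OF a] by blast+
  consider (all_D) "V - D = {}"
    | (isolated) v where "v \<in> V - D" "\<forall>z. \<not> E v z"
    | (leaf_in_D) u w where "u \<in> D" "{z. E u z} = {w}"
    | (no_leaf_in_D) v z where "v \<in> V - D" "E v z" "\<And>u w. u \<in> D \<Longrightarrow> {z. E u z} \<noteq> {w}"
    by blast
  then show ?case
  proof cases
    case all_D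
    then have "pairing V E D (\<lambda>_ _. False)" unfolding pairing_def matching_def by blast
    then show ?thesis by blast
  next
    case isolated
    then have "trap V E D {v}" unfolding trap_def by auto
    then show ?thesis by blast
  next
    case leaf_in_D
    have "u \<in> V" using graph_edge_in[OF g] leaf_in_D(2) by blast
    then have "card (V - {u}) < card V" using card_Diff1_less[OF graph_finite[OF g]] by blast
    then show ?thesis
      using trap_or_pairing_remove_leaf_in_D[OF g leaf_in_D] less.hyps restrict by blast
  next
    case no_leaf_in_D
    obtain v1 v0 where E10: "E v1 v0" and v0: "{z. E v0 z} = {v1}"
      and inner: "card {z. E v1 z \<and> card {y. E z y} \<noteq> 1} \<le> 1"
      using edge_imp_support_vertex[OF g a no_leaf_in_D(2)] by blast
    have v0V: "v0 \<in> V - D" using graph_edge_in[OF g E10] no_leaf_in_D(3) v0 by blast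
    show ?thesis
    proof (cases "\<exists>l. {z. E l z} = {v1} \<and> l \<noteq> v0")
      case True
      then obtain l where l: "{z. E l z} = {v1}" "l \<noteq> v0" by blast
      have "l \<in> V - D" using graph_edge_in[OF g] l(1) no_leaf_in_D(3) by blast
      then have "trap V E D {v0, l}"
        using trap_twin_leaves[OF v0 l(1)] l(2) v0V graph_irrefl[OF g] by blast
      then show ?thesis by blast
    next
      case False
      have "card (V - {v0, v1}) < card V"
        using v0V graph_finite[OF g] by (intro psubset_card_mono) auto
      then show ?thesis
        using trap_or_pairing_remove_leaf_pair[OF g v0V v0 inner] False less.hyps restrict by blast
    qed
  qed
qed

section \<open>Substructures and minimal traps\<close>

lemma substructure_keeps_neighbours:
  assumes g: "graph V E" and s: "substructure V E VF EF X" and x: "x \<in> X" and xz: "E x z"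
  shows "EF x z"
proof -
  have sub: "nbhd VF EF x \<subseteq> nbhd V E x"
    using s unfolding substructure_def subgraph_def nbhd_def by blast
  have "nbhd VF EF x = nbhd V E x"
    using card_subset_eq[OF _ sub] finite_neighbours[OF g] nbhd_graph[OF g] s x
    unfolding substructure_def degree_def by simp
  moreover have "z \<in> nbhd V E x" using xz graph_edge_in[OF g xz] unfolding nbhd_def by blast
  ultimately show ?thesis unfolding nbhd_def by blast
qed

lemma trap_of_substructure:
  assumes g: "graph V E" and s: "substructure V E VF EF X" and XD: "X \<inter> D = {}"
  shows "trap V E D X"
proof -
  obtain ET m where XVF: "X \<subseteq> VF" and t: "tree X ET"
    and bij: "bij_betw m {{x, y} | x y. ET x y} (VF - X)"
    and EF: "\<And>u w. EF u w \<longleftrightarrow> (\<exists>x y. ET x y \<and> ((u = x \<and> w = m {x, y}) \<or> (u = m {x, y} \<and> w = x)))"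
    using s unfolding substructure_def is_S_graph_def by blast
  have gT: "graph X ET" using t unfolding tree_def by blast
  have m_out: "m {x, y} \<in> VF - X" if "ET x y" for x y
    using bij_betwE[OF bij] that by blast
  have m_inj: "{x, y} = {x', y'}" if "ET x y" "ET x' y'" "m {x, y} = m {x', y'}" for x y x' y'
    using bij that unfolding bij_betw_def inj_on_def by blast
  have nb: "\<exists>y. ET x y \<and> z = m {x, y}" if x: "x \<in> X" and xz: "E x z" for x z
  proof -
    obtain a b where "ET a b" "(x = a \<and> z = m {a, b}) \<or> (x = m {a, b} \<and> z = a)"
      using EF substructure_keeps_neighbours[OF g s x xz] by blast
    with m_out \<open>x \<in> X\<close> show ?thesis by blast
  qed
  show ?thesis
    unfolding trap_def
  proof (intro conjI ballI allI impI)
    show "X \<noteq> {}" using t unfolding tree_def by blast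
    show "X \<subseteq> V" using XVF s unfolding substructure_def subgraph_def by blast
    show "X \<inter> D = {}" by (fact XD)
    fix x assume x: "x \<in> X"
    show "\<not> E x y" if "y \<in> X" for y
      using nb[OF x] m_out that by blast
    fix z assume "E x z"
    then obtain y where y: "ET x y" "z = m {x, y}" using nb[OF x] by blast
    have "E y z"
      using EF[of y z] y graph_sym[OF gT y(1)] s unfolding substructure_def subgraph_def
      by (metis insert_commute)
    have "{w\<in>X. E w z} = {x, y}"
    proof
      show "{w\<in>X. E w z} \<subseteq> {x, y}"
      proof
        fix w assume "w \<in> {w\<in>X. E w z}"
        then obtain y' where "ET w y'" "z = m {w, y'}" using nb by blast
        then have "{w, y'} = {x, y}" using m_inj y by metis
        then show "w \<in> {x, y}" by blast
      qed
      show "{x, y} \<subseteq> {w\<in>X. E w z}"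
        using x \<open>E x z\<close> \<open>E y z\<close> graph_edge_in[OF gT y(1)] by blast
    qed
    moreover have "x \<noteq> y" using graph_irrefl[OF gT, of x] y(1) by blast
    ultimately show "card {w\<in>X. E w z} = 2" by simp
  qed
qed

definition co_adjacent :: "'a set \<Rightarrow> ('a \<Rightarrow> 'a \<Rightarrow> bool) \<Rightarrow> 'a \<Rightarrow> 'a \<Rightarrow> bool" where
  "co_adjacent X E x y \<longleftrightarrow> x \<in> X \<and> y \<in> X \<and> x \<noteq> y \<and> (\<exists>z. E x z \<and> E y z)"

text \<open>Arbitrary unless the vertices of e have a common neighbour, which in a forest is unique when
e has two elements.\<close>
definition common_neighbour :: "('a \<Rightarrow> 'a \<Rightarrow> bool) \<Rightarrow> 'a set \<Rightarrow> 'a" where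
  "common_neighbour E e = (SOME z. \<forall>v\<in>e. E v z)"

lemma common_neighbour_adjacent:
  assumes "co_adjacent X E x y"
  shows "E x (common_neighbour E {x, y})" "E y (common_neighbour E {x, y})"
proof -
  have "\<exists>z. \<forall>v\<in>{x, y}. E v z" using assms unfolding co_adjacent_def by blast
  from someI_ex[OF this] show "E x (common_neighbour E {x, y})" "E y (common_neighbour E {x, y})"
    unfolding common_neighbour_def by simp_all
qed

lemma common_neighbour_unique:
  assumes "graph V E" "cycle_free E" "co_adjacent X E x y" "E x z" "E y z"
  shows "common_neighbour E {x, y} = z"
  using cycle_free_at_most_one_common_neighbour[OF assms(1,2)] common_neighbour_adjacent[OF assms(3)] assms(3-5)
  unfolding co_adjacent_def by blast

lemma trap_neighbour_shared:
  assumes t: "trap V E D X" and x: "x \<in> X" and xz: "E x z"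
  shows "\<exists>y. co_adjacent X E x y \<and> E y z"
proof -
  have "card {w\<in>X. E w z} = 2" using t x xz unfolding trap_def by blast
  then obtain p q where "{w\<in>X. E w z} = {p, q}" "p \<noteq> q" by (meson card_2_iff)
  then show ?thesis using x xz unfolding co_adjacent_def by blast
qed

lemma trap_neighbours_of_shared_neighbour:
  assumes t: "trap V E D X" and xy: "co_adjacent X E x y" and "E x z" "E y z"
  shows "{w\<in>X. E w z} = {x, y}"
proof -
  have card: "card {w\<in>X. E w z} = 2" and "x \<noteq> y"
    using t xy \<open>E x z\<close> unfolding trap_def co_adjacent_def by blast+
  have "finite {w\<in>X. E w z}" using card by (intro card_ge_0_finite) simp
  moreover have "{x, y} \<subseteq> {w\<in>X. E w z}"
    using xy \<open>E x z\<close> \<open>E y z\<close> unfolding co_adjacent_def by blast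
  moreover have "card {x, y} = card {w\<in>X. E w z}" using card \<open>x \<noteq> y\<close> by simp
  ultimately show ?thesis by (metis card_subset_eq)
qed

lemma common_neighbour_notin_trap:
  assumes "trap V E D X" and "co_adjacent X E x y"
  shows "common_neighbour E {x, y} \<notin> X"
proof -
  have "x \<in> X" and "\<forall>x\<in>X. \<forall>y\<in>X. \<not> E x y"
    using assms unfolding trap_def co_adjacent_def by blast+
  then show ?thesis using common_neighbour_adjacent(1)[OF assms(2)] by blast
qed

lemma common_neighbour_inj:
  assumes t: "trap V E D X" and "co_adjacent X E x y" "co_adjacent X E x' y'"
    and eq: "common_neighbour E {x, y} = common_neighbour E {x', y'}"
  shows "{x, y} = {x', y'}"
proof -
  have "{x, y} = {w\<in>X. E w (common_neighbour E {x, y})}"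
    using trap_neighbours_of_shared_neighbour[OF t assms(2) common_neighbour_adjacent[OF assms(2)]] ..
  also have "\<dots> = {x', y'}"
    unfolding eq by (rule trap_neighbours_of_shared_neighbour[OF t assms(3) common_neighbour_adjacent[OF assms(3)]])
  finally show ?thesis .
qed

lemma trap_co_adjacent_component:
  assumes t: "trap V E D X" and x0: "x0 \<in> X"
  shows "trap V E D {y\<in>X. (co_adjacent X E)\<^sup>*\<^sup>* x0 y}" (is "trap V E D ?C")
  unfolding trap_def
proof (intro conjI ballI allI impI)
  show "?C \<noteq> {}" using x0 by blast
  show "?C \<subseteq> V" "?C \<inter> D = {}" using t unfolding trap_def by blast+
  fix c assume c: "c \<in> ?C"
  show "\<not> E c y" if "y \<in> ?C" for y using t c that unfolding trap_def by blast
  fix z assume cz: "E c z"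
  have "{y\<in>?C. E y z} = {y\<in>X. E y z}"
  proof (intro subset_antisym subsetI)
    fix y assume y: "y \<in> {y\<in>X. E y z}"
    show "y \<in> {y\<in>?C. E y z}"
    proof (cases "y = c")
      case False
      then have "co_adjacent X E c y" using c y cz unfolding co_adjacent_def by blast
      then show ?thesis using c y by (auto intro: rtranclp.rtrancl_into_rtrancl)
    qed (use c y in blast)
  qed blast
  moreover have "card {y\<in>X. E y z} = 2" using t c cz unfolding trap_def by blast
  ultimately show "card {y\<in>?C. E y z} = 2" by simp
qed

lemma minimal_trap_connected:
  assumes t: "trap V E D X" and minimal: "\<forall>Z. Z \<subset> X \<longrightarrow> \<not> trap V E D Z"
  shows "connected X (co_adjacent X E)"
  unfolding connected_def
proof (intro ballI)
  fix u v assume "u \<in> X" "v \<in> X"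
  have "trap V E D {y\<in>X. (co_adjacent X E)\<^sup>*\<^sup>* u y}"
    using trap_co_adjacent_component[OF t \<open>u \<in> X\<close>] .
  then have "\<not> {y\<in>X. (co_adjacent X E)\<^sup>*\<^sup>* u y} \<subset> X" using minimal by blast
  then have "{y\<in>X. (co_adjacent X E)\<^sup>*\<^sup>* u y} = X" by blast
  then show "(co_adjacent X E)\<^sup>*\<^sup>* u v" using \<open>v \<in> X\<close> by blast
qed

lemma is_cycle_wrap:
  assumes "is_cycle R cs" and "i < length cs"
  shows "R (cs ! i) (cs ! ((i + 1) mod length cs))"
proof (cases "i + 1 = length cs")
  case True
  have "cs \<noteq> []" using assms(2) by auto
  moreover have "length cs - 1 = i" using True by simp
  ultimately have "last cs = cs ! i" "hd cs = cs ! 0" by (simp_all add: last_conv_nth hd_conv_nth)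
  then show ?thesis using assms(1) True unfolding is_cycle_def by simp
next
  case False
  then show ?thesis using assms unfolding is_cycle_def by simp
qed

lemma cyclic_successor_pair_inj:
  assumes "distinct cs" and "3 \<le> length cs" and "a < length cs" and "b < length cs"
    and "{cs ! a, cs ! ((a + 1) mod length cs)} = {cs ! b, cs ! ((b + 1) mod length cs)}"
  shows "a = b"
proof -
  let ?k = "length cs"
  have succ: "(i + 1) mod ?k = (if i + 1 = ?k then 0 else i + 1)" if "i < ?k" for i
    using that by auto
  have idx: "i = j" if "cs ! i = cs ! j" "i < ?k" "j < ?k" for i j
    using assms(1) that nth_eq_iff_index_eq by blast
  have "0 < ?k" using assms(2) by linarith
  then have "(a + 1) mod ?k < ?k" "(b + 1) mod ?k < ?k" by simp_all
  then have "a = b \<or> (a = (b + 1) mod ?k \<and> (a + 1) mod ?k = b)"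
    using assms(3-5) idx by (metis doubleton_eq_iff)
  then show ?thesis using succ[OF assms(3)] succ[OF assms(4)] assms(2) by (auto split: if_splits)
qed

text \<open>The cycle cs with the vertex m x y inserted between any two cyclically consecutive
vertices x, y.\<close>
definition subdivision_nth :: "('a \<Rightarrow> 'a \<Rightarrow> 'a) \<Rightarrow> 'a list \<Rightarrow> nat \<Rightarrow> 'a" where
  "subdivision_nth m cs j = (if even j then cs ! (j div 2)
     else m (cs ! (j div 2)) (cs ! ((j div 2 + 1) mod length cs)))"

definition subdivide_cycle :: "('a \<Rightarrow> 'a \<Rightarrow> 'a) \<Rightarrow> 'a list \<Rightarrow> 'a list" where
  "subdivide_cycle m cs = map (subdivision_nth m cs) [0..<2 * length cs]"

lemma distinct_subdivide_cycle:
  assumes cyc: "is_cycle R cs"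
    and mid_notin: "\<And>x y. R x y \<Longrightarrow> m x y \<notin> set cs"
    and mid_inj: "\<And>x y x' y'. R x y \<Longrightarrow> R x' y' \<Longrightarrow> m x y = m x' y' \<Longrightarrow> {x, y} = {x', y'}"
  shows "distinct (subdivide_cycle m cs)"
proof -
  let ?f = "subdivision_nth m cs" and ?k = "length cs"
  have k3: "3 \<le> ?k" and dist: "distinct cs" using cyc unfolding is_cycle_def by blast+
  have R: "R (cs ! i) (cs ! ((i + 1) mod ?k))" if "i < ?k" for i
    using is_cycle_wrap[OF cyc] that by blast
  have "inj_on ?f {0..<2 * ?k}"
  proof (rule inj_onI)
    fix j1 j2 assume "j1 \<in> {0..<2 * ?k}" "j2 \<in> {0..<2 * ?k}" and eq: "?f j1 = ?f j2"
    then have i: "j1 div 2 < ?k" "j2 div 2 < ?k" by auto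
    have parity: "?f j \<in> set cs \<longleftrightarrow> even j" if "j div 2 < ?k" for j
      using that mid_notin[OF R] nth_mem unfolding subdivision_nth_def by auto
    have "j1 div 2 = j2 div 2 \<and> (even j1 \<longleftrightarrow> even j2)"
    proof (cases "even j1"; cases "even j2")
      assume "even j1" "even j2"
      then show ?thesis using eq i dist nth_eq_iff_index_eq unfolding subdivision_nth_def by fastforce
    next
      assume "odd j1" "odd j2"
      then have "{cs ! (j1 div 2), cs ! ((j1 div 2 + 1) mod ?k)}
          = {cs ! (j2 div 2), cs ! ((j2 div 2 + 1) mod ?k)}"
        using eq mid_inj R i unfolding subdivision_nth_def by simp
      then show ?thesis using cyclic_successor_pair_inj[OF dist k3] i \<open>odd j1\<close> \<open>odd j2\<close> by blast
    qed (use eq parity[OF i(1)] parity[OF i(2)] in auto)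
    then show "j1 = j2" by (metis div_mult_mod_eq odd_iff_mod_2_eq_one even_iff_mod_2_eq_zero)
  qed
  then show ?thesis unfolding subdivide_cycle_def by (simp add: distinct_map)
qed

lemma is_cycle_subdivide_cycle:
  assumes cyc: "is_cycle R cs"
    and mid: "\<And>x y. R x y \<Longrightarrow> E x (m x y) \<and> E (m x y) y"
    and mid_notin: "\<And>x y. R x y \<Longrightarrow> m x y \<notin> set cs"
    and mid_inj: "\<And>x y x' y'. R x y \<Longrightarrow> R x' y' \<Longrightarrow> m x y = m x' y' \<Longrightarrow> {x, y} = {x', y'}"
  shows "is_cycle E (subdivide_cycle m cs)"
proof -
  let ?f = "subdivision_nth m cs" and ?k = "length cs"
  have k3: "3 \<le> ?k" using cyc unfolding is_cycle_def by blast
  have R: "R (cs ! i) (cs ! ((i + 1) mod ?k))" if "i < ?k" for i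
    using is_cycle_wrap[OF cyc] that by blast
  have step: "E (?f j) (?f (Suc j))" if "Suc j < 2 * ?k" for j
  proof (cases "even j")
    case True
    then show ?thesis using mid R[of "j div 2"] that unfolding subdivision_nth_def by auto
  next
    case False
    then have "Suc j div 2 = Suc (j div 2)" "Suc (j div 2) < ?k" using that by (auto elim!: oddE)
    then show ?thesis using mid R[of "j div 2"] False that unfolding subdivision_nth_def by auto
  qed
  have wrap: "E (?f (2 * ?k - 1)) (?f 0)"
  proof -
    have "odd (2 * ?k - 1)" "(2 * ?k - 1) div 2 = ?k - 1" and k: "?k - 1 + 1 = ?k" using k3 by auto
    then have "?f (2 * ?k - 1) = m (cs ! (?k - 1)) (cs ! 0)" "?f 0 = cs ! 0"
      unfolding subdivision_nth_def by simp_all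
    moreover have "R (cs ! (?k - 1)) (cs ! 0)" using R[of "?k - 1"] k3 k by simp
    ultimately show ?thesis using mid by simp
  qed
  have "0 < 2 * ?k" using k3 by linarith
  then have len: "length (subdivide_cycle m cs) = 2 * ?k"
    and nth: "\<And>j. j < 2 * ?k \<Longrightarrow> subdivide_cycle m cs ! j = ?f j"
    and "last (subdivide_cycle m cs) = ?f (2 * ?k - 1)" "hd (subdivide_cycle m cs) = ?f 0"
    unfolding subdivide_cycle_def by (simp_all add: last_map hd_map)
  then show ?thesis
    unfolding is_cycle_def
  proof (intro conjI allI impI)
    show "3 \<le> length (subdivide_cycle m cs)" using len k3 by simp
    show "distinct (subdivide_cycle m cs)" by (rule distinct_subdivide_cycle[OF cyc mid_notin mid_inj])
    show "E (subdivide_cycle m cs ! j) (subdivide_cycle m cs ! Suc j)"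
      if "Suc j < length (subdivide_cycle m cs)" for j
      using that len nth[of j] nth[of "Suc j"] step[of j] by simp
  qed (use wrap in simp)
qed

lemma cycle_free_co_adjacent:
  assumes g: "graph V E" and a: "cycle_free E" and t: "trap V E D X"
  shows "cycle_free (co_adjacent X E)"
  unfolding cycle_free_def
proof
  assume "\<exists>cs. is_cycle (co_adjacent X E) cs"
  then obtain cs where cyc: "is_cycle (co_adjacent X E) cs" by blast
  let ?m = "\<lambda>x y. common_neighbour E {x, y}"
  have "set cs \<subseteq> X"
    using is_cycle_wrap[OF cyc] unfolding co_adjacent_def by (metis in_set_conv_nth subsetI)
  then have "is_cycle E (subdivide_cycle ?m cs)"
  proof (intro is_cycle_subdivide_cycle[OF cyc])
    show "E x (?m x y) \<and> E (?m x y) y" if "co_adjacent X E x y" for x y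
      using common_neighbour_adjacent[OF that] graph_sym[OF g] by blast
    show "?m x y \<notin> set cs" if "co_adjacent X E x y" "set cs \<subseteq> X" for x y
      using common_neighbour_notin_trap[OF t that(1)] that(2) by blast
    show "{x, y} = {x', y'}"
      if "co_adjacent X E x y" "co_adjacent X E x' y'" "?m x y = ?m x' y'" for x y x' y'
      using common_neighbour_inj[OF t that] .
  qed
  with a show False unfolding cycle_free_def by blast
qed

lemma tree_co_adjacent:
  assumes g: "graph V E" and a: "cycle_free E" and t: "trap V E D X"
    and c: "connected X (co_adjacent X E)"
  shows "tree X (co_adjacent X E)"
proof -
  have "finite X" using t graph_finite[OF g] finite_subset unfolding trap_def by blast
  then have "graph X (co_adjacent X E)" unfolding graph_def co_adjacent_def by blast
  moreover have "X \<noteq> {}" using t unfolding trap_def by blast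
  ultimately show ?thesis
    using c cycle_free_co_adjacent[OF g a t] unfolding tree_def cycle_free_def by blast
qed

lemma common_neighbour_bij:
  assumes g: "graph V E" and a: "cycle_free E" and t: "trap V E D X"
  shows "bij_betw (common_neighbour E) {{x, y} | x y. co_adjacent X E x y} {z. \<exists>x\<in>X. E x z}"
  unfolding bij_betw_def
proof
  show "inj_on (common_neighbour E) {{x, y} | x y. co_adjacent X E x y}"
    using common_neighbour_inj[OF t] by (intro inj_onI) blast
  show "common_neighbour E ` {{x, y} | x y. co_adjacent X E x y} = {z. \<exists>x\<in>X. E x z}"
  proof (intro subset_antisym subsetI)
    fix z assume "z \<in> common_neighbour E ` {{x, y} | x y. co_adjacent X E x y}"
    then obtain x y where xy: "co_adjacent X E x y" and z: "z = common_neighbour E {x, y}" by blast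
    have "x \<in> X" using xy unfolding co_adjacent_def by blast
    then show "z \<in> {z. \<exists>x\<in>X. E x z}" using common_neighbour_adjacent(1)[OF xy] z by blast
  next
    fix z assume "z \<in> {z. \<exists>x\<in>X. E x z}"
    then obtain x where "x \<in> X" "E x z" by blast
    then obtain y where "co_adjacent X E x y" "E y z" using trap_neighbour_shared[OF t] by blast
    then show "z \<in> common_neighbour E ` {{x, y} | x y. co_adjacent X E x y}"
      using common_neighbour_unique[OF g a] \<open>E x z\<close> by blast
  qed
qed

definition subdivision_edges :: "'a set \<Rightarrow> ('a \<Rightarrow> 'a \<Rightarrow> bool) \<Rightarrow> 'a \<Rightarrow> 'a \<Rightarrow> bool" where
  "subdivision_edges X E u w \<longleftrightarrow> (\<exists>x y. co_adjacent X E x y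
     \<and> ((u = x \<and> w = common_neighbour E {x, y}) \<or> (u = common_neighbour E {x, y} \<and> w = x)))"

lemma subdivision_edges_subgraph:
  assumes g: "graph V E" and uw: "subdivision_edges X E u w"
  shows "E u w"
proof -
  obtain x y where xy: "co_adjacent X E x y"
    and "(u = x \<and> w = common_neighbour E {x, y}) \<or> (u = common_neighbour E {x, y} \<and> w = x)"
    using uw unfolding subdivision_edges_def by blast
  with common_neighbour_adjacent(1)[OF xy] graph_sym[OF g] show ?thesis by blast
qed

lemma subdivision_edges_at_trap:
  assumes g: "graph V E" and a: "cycle_free E" and t: "trap V E D X" and v: "v \<in> X"
  shows "subdivision_edges X E v z \<longleftrightarrow> E v z"
proof
  assume "subdivision_edges X E v z"
  then obtain x y where xy: "co_adjacent X E x y"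
    and "(v = x \<and> z = common_neighbour E {x, y}) \<or> (v = common_neighbour E {x, y} \<and> z = x)"
    unfolding subdivision_edges_def by blast
  moreover have "v \<noteq> common_neighbour E {x, y}" using common_neighbour_notin_trap[OF t xy] v by blast
  ultimately show "E v z" using common_neighbour_adjacent(1)[OF xy] by blast
next
  assume "E v z"
  then obtain y where "co_adjacent X E v y" "E y z" using trap_neighbour_shared[OF t v] by blast
  then show "subdivision_edges X E v z"
    using common_neighbour_unique[OF g a] \<open>E v z\<close> unfolding subdivision_edges_def by blast
qed

lemma graph_subdivision_edges:
  assumes g: "graph V E" and t: "trap V E D X"
  shows "graph (X \<union> {z. \<exists>x\<in>X. E x z}) (subdivision_edges X E)"
proof -
  let ?N = "{z. \<exists>x\<in>X. E x z}"
  have in_X: "x \<in> X" if "co_adjacent X E x y" for x y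
    using that unfolding co_adjacent_def by blast
  have in_N: "common_neighbour E {x, y} \<in> ?N" if "co_adjacent X E x y" for x y
    using common_neighbour_adjacent(1)[OF that] in_X[OF that] by blast
  have "X \<union> ?N \<subseteq> V" using t graph_edge_in[OF g] unfolding trap_def by blast
  then have "finite (X \<union> ?N)" using graph_finite[OF g] by (rule finite_subset)
  moreover have "\<forall>u w. subdivision_edges X E u w \<longrightarrow> u \<in> X \<union> ?N \<and> w \<in> X \<union> ?N"
    using in_N in_X unfolding subdivision_edges_def by blast
  moreover have "\<forall>u w. subdivision_edges X E u w \<longrightarrow> subdivision_edges X E w u"
    unfolding subdivision_edges_def by blast
  moreover have "x \<noteq> common_neighbour E {x, y}" if "co_adjacent X E x y" for x y
    using common_neighbour_notin_trap[OF t that] in_X[OF that] by auto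
  then have "\<forall>u. \<not> subdivision_edges X E u u" unfolding subdivision_edges_def by (metis (no_types))
  ultimately show ?thesis unfolding graph_def by blast
qed

lemma substructure_of_connected_trap:
  assumes g: "graph V E" and a: "cycle_free E" and t: "trap V E D X"
    and c: "connected X (co_adjacent X E)"
  shows "substructure V E (X \<union> {z. \<exists>x\<in>X. E x z}) (subdivision_edges X E) X"
proof -
  let ?N = "{z. \<exists>x\<in>X. E x z}"
  have XN: "(X \<union> ?N) - X = ?N" using t unfolding trap_def by blast
  have "X \<union> ?N \<subseteq> V" using t graph_edge_in[OF g] unfolding trap_def by blast
  moreover have "is_S_graph (X \<union> ?N) (subdivision_edges X E) X"
    unfolding is_S_graph_def XN
    using tree_co_adjacent[OF g a t c] common_neighbour_bij[OF g a t]
    unfolding subdivision_edges_def by auto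
  moreover have "nbhd V E v = nbhd (X \<union> ?N) (subdivision_edges X E) v" if "v \<in> X" for v
    using subdivision_edges_at_trap[OF g a t that] graph_edge_in[OF g] that unfolding nbhd_def by blast
  ultimately show ?thesis
    unfolding substructure_def subgraph_def degree_def
    using graph_subdivision_edges[OF g t] subdivision_edges_subgraph[OF g] by simp
qed

lemma trap_contains_substructure:
  assumes g: "graph V E" and a: "cycle_free E" and t: "trap V E D X"
  shows "\<exists>VF EF Y. substructure V E VF EF Y \<and> Y \<inter> D = {}"
proof -
  have "finite {Y. trap V E D Y}"
    using graph_finite[OF g] by (rule finite_subset[rotated, OF finite_Pow_iff[THEN iffD2]])
      (auto simp: trap_def)
  then obtain Y where Y: "trap V E D Y" and minimal: "\<forall>Z. trap V E D Z \<longrightarrow> Z \<subseteq> Y \<longrightarrow> Y = Z"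
    using finite_has_minimal2[of "{Y. trap V E D Y}" X] t by auto
  then have "connected Y (co_adjacent Y E)"
    using minimal_trap_connected[OF Y] by blast
  then have "substructure V E (Y \<union> {z. \<exists>y\<in>Y. E y z}) (subdivision_edges Y E) Y"
    by (rule substructure_of_connected_trap[OF g a Y])
  moreover have "Y \<inter> D = {}" using Y unfolding trap_def by blast
  ultimately show ?thesis by blast
qed

theorem theorem4p5:
  fixes V :: "'a set" and E :: "'a \<Rightarrow> 'a \<Rightarrow> bool" and D :: "'a set"
  assumes "tree V E" and "D \<subseteq> V"
  shows "staller_wins_MBD V E D \<longleftrightarrow>
         (\<exists>VF EF X. substructure V E VF EF X \<and> X \<inter> D = {})"
proof -
  have g: "graph V E" and a: "cycle_free E"
    using assms(1) unfolding tree_def cycle_free_def by blast+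
  show ?thesis
  proof
    assume "staller_wins_MBD V E D"
    then have "\<nexists>P. pairing V E D P" using pairing_dominator_wins[OF g] by blast
    then obtain X where "trap V E D X" using trap_or_pairing[OF g a] by blast
    then show "\<exists>VF EF X. substructure V E VF EF X \<and> X \<inter> D = {}"
      using trap_contains_substructure[OF g a] by blast
  next
    assume "\<exists>VF EF X. substructure V E VF EF X \<and> X \<inter> D = {}"
    then obtain VF EF X where "substructure V E VF EF X" "X \<inter> D = {}" by blast
    then show "staller_wins_MBD V E D"
      using trap_of_substructure[OF g] trap_staller_wins[OF g a] by blast
  qed
qed

end
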